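(* For any $p$-regular multigraph $G$ and $W\sim\mathrm{Wig}$, $\mathrm{Var}\, m_G(W)\ge n^{\underline{|E(G)|}}$.
   Context: $\mathrm{Wig}$ is the law of $W\in\mathrm{Sym}^p(\mathbb{R}^n)$ with $W_{i_1,\dots,i_p}=\frac{1}{\sqrt{p!}}\sum_{\pi\in S_p}G_{i_{\pi(1)},\dots,i_{\pi(p)}}$, $G$ with i.i.d. $\mathcal{N}(0,1)$ entries. $n^{\underline b}=n(n-1)\cdots(n-b+1)$. Multigraphs $G=(V,E)$ may have loops and parallel edges (a loop contributes 2 to the degree); for $i\in[n]^E$, $i(\partial v)$ is the multiset of labels of edges at $v$ (loops twice), and $m_G(T)=\sum_{i\in[n]^E}\prod_{v\in V}T_{i(\partial v)}$. *)

theory Defs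
  imports "HOL-Probability.Probability" "HOL-Library.Multiset" "HOL-Combinatorics.Permutations"
begin

definition tidx :: "nat \<Rightarrow> nat \<Rightarrow> nat list set" where
  "tidx n p = {xs. length xs = p \<and> set xs \<subseteq> {..<n}}"

definition gauss_tensor :: "nat \<Rightarrow> nat \<Rightarrow> (nat list \<Rightarrow> real) measure" where
  "gauss_tensor n p = PiM (tidx n p) (\<lambda>_. std_normal_distribution)"

text \<open>The symmetrisation map G \<mapsto> W, so that W ~ Wig when G ~ gauss_tensor.\<close>
definition wig :: "nat \<Rightarrow> (nat list \<Rightarrow> real) \<Rightarrow> nat list \<Rightarrow> real" where
  "wig p G xs = (1 / sqrt (fact p)) *
     (\<Sum>\<pi> \<in> {\<pi>. \<pi> permutes {..<p}}. G (map (\<lambda>k. xs ! \<pi> k) [0..<p]))"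

text \<open>Multigraph: finite vertex set V, finite edge set E, each edge has a 2-element
  multiset of endpoints in V (a loop at v is {#v,v#}).\<close>
definition multigraph :: "'v set \<Rightarrow> 'e set \<Rightarrow> ('e \<Rightarrow> 'v multiset) \<Rightarrow> bool" where
  "multigraph V E ends \<longleftrightarrow> finite V \<and> finite E \<and>
     (\<forall>e\<in>E. size (ends e) = 2 \<and> set_mset (ends e) \<subseteq> V)"

definition mdegree :: "'e set \<Rightarrow> ('e \<Rightarrow> 'v multiset) \<Rightarrow> 'v \<Rightarrow> nat" where
  "mdegree E ends v = (\<Sum>e\<in>E. count (ends e) v)"

definition regular :: "nat \<Rightarrow> 'v set \<Rightarrow> 'e set \<Rightarrow> ('e \<Rightarrow> 'v multiset) \<Rightarrow> bool" where
  "regular p V E ends \<longleftrightarrow> multigraph V E ends \<and> (\<forall>v\<in>V. mdegree E ends v = p)"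

text \<open>i(\<partial>v): multiset of labels of edges at v (loops counted twice).\<close>
definition labels_at :: "'e set \<Rightarrow> ('e \<Rightarrow> 'v multiset) \<Rightarrow> ('e \<Rightarrow> nat) \<Rightarrow> 'v \<Rightarrow> nat multiset" where
  "labels_at E ends i v = (\<Sum>e\<in>E. replicate_mset (count (ends e) v) (i e))"

text \<open>m_G(T); T_M for a multiset M is T evaluated at the sorted list of M
  (well defined for symmetric T).\<close>
definition mG :: "nat \<Rightarrow> 'v set \<Rightarrow> 'e set \<Rightarrow> ('e \<Rightarrow> 'v multiset) \<Rightarrow> (nat list \<Rightarrow> real) \<Rightarrow> real" where
  "mG n V E ends T = (\<Sum>i \<in> PiE E (\<lambda>_. {..<n}).
      \<Prod>v\<in>V. T (sorted_list_of_multiset (labels_at E ends i v)))"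

definition Var :: "'a measure \<Rightarrow> ('a \<Rightarrow> real) \<Rightarrow> real" where
  "Var M X = integral\<^sup>L M (\<lambda>x. (X x - integral\<^sup>L M X)\<^sup>2)"

definition falling :: "nat \<Rightarrow> nat \<Rightarrow> real" where
  "falling n b = (\<Prod>k<b. real n - real k)"

end

theory Submission
  imports Defs
begin

text \<open>Expanding the symmetrisation and the product over the vertices writes m_G(W) as
  c = (p!)^(-|V|/2) times a sum of n^|E| (p!)^|V| monomials in the independent standard
  Gaussian entries of G. Since E[x^a] E[x^b] \<le> E[x^(a+b)] for a standard Gaussian x, any two
  such monomials have nonnegative covariance, and a nonconstant monomial has variance at
  least 1. Hence the variance is at least c^2 times the number of monomials, which is
  n^|E| \<ge> n(n-1)...(n-|E|+1).\<close>

fun gauss_moment :: "nat \<Rightarrow> real" where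
  "gauss_moment 0 = 1"
| "gauss_moment (Suc 0) = 0"
| "gauss_moment (Suc (Suc k)) = (real k + 1) * gauss_moment k"

lemma gauss_moment_even: "gauss_moment (2 * j) = fact (2 * j) / (2 ^ j * fact j)"
proof (induction j)
  case (Suc j)
  have e: "2 * Suc j = Suc (Suc (2 * j))"
    by simp
  have "gauss_moment (2 * Suc j) = (2 * real j + 1) * (fact (2 * j) / (2 ^ j * fact j))"
    unfolding e using Suc by simp
  also have "\<dots> = fact (2 * Suc j) / (2 ^ Suc j * fact (Suc j))"
  proof -
    have "fact (2 * Suc j) = (2 * real j + 2) * (2 * real j + 1) * fact (2 * j)"
      unfolding e fact_Suc by (simp add: algebra_simps)
    moreover have "fact (Suc j) = (real j + 1) * fact j"
      unfolding fact_Suc by simp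
    moreover have "(0::real) < fact j" "(0::real) < 2 ^ j"
      by auto
    ultimately show ?thesis
      by (simp add: divide_simps)
  qed
  finally show ?case .
qed simp

lemma gauss_moment_odd: "odd k \<Longrightarrow> gauss_moment k = 0"
  by (induction k rule: gauss_moment.induct) simp_all

lemma integral_std_normal_power:
  "integral\<^sup>L std_normal_distribution (\<lambda>x. x ^ k) = gauss_moment k"
  by (cases "even k")
    (auto elim!: evenE simp: std_normal_distribution_even_moments gauss_moment_even
      gauss_moment_odd integral_std_normal_distribution_moment_odd)

lemma gauss_moment_nonneg: "0 \<le> gauss_moment k"
  by (induction k rule: gauss_moment.induct) simp_all

lemma gauss_moment_even_ge_1: "even k \<Longrightarrow> 1 \<le> gauss_moment k"
proof (induction k rule: gauss_moment.induct)
  case (3 k)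
  then have "1 * 1 \<le> (real k + 1) * gauss_moment k"
    by (intro mult_mono) simp_all
  then show ?case by simp
qed simp_all

lemma gauss_moment_mult_le: "gauss_moment a * gauss_moment b \<le> gauss_moment (a + b)"
proof (induction a rule: gauss_moment.induct)
  case 2
  show ?case using gauss_moment_nonneg by simp
next
  case (3 k)
  have "(real k + 1) * (gauss_moment k * gauss_moment b)
      \<le> (real (k + b) + 1) * gauss_moment (k + b)"
    using 3 by (intro mult_mono) (simp_all add: gauss_moment_nonneg)
  then show ?case by (simp add: mult.assoc)
qed simp

lemma gauss_moment_variance_ge_1:
  assumes "0 < a"
  shows "1 \<le> gauss_moment (a + a) - (gauss_moment a)\<^sup>2"
proof (cases "even a")
  case False
  then show ?thesis
    by (simp add: gauss_moment_odd gauss_moment_even_ge_1)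
next
  case True
  define k where "k = a - 2"
  have "a \<noteq> 1"
    using True by auto
  then have a: "a = Suc (Suc k)"
    using assms unfolding k_def by linarith
  then have "even k"
    using True by simp
  text \<open>With X = m(k) m(a): m(a)^2 = (k + 1) X while m(2a) \<ge> (k + a + 1) X, so the
    difference is at least a X \<ge> 1.\<close>
  define X where "X = gauss_moment k * gauss_moment a"
  have ma: "gauss_moment a = (real k + 1) * gauss_moment k"
    using a by simp
  have "a + a = Suc (Suc (k + a))"
    using a by simp
  then have maa: "gauss_moment (a + a) = (real (k + a) + 1) * gauss_moment (k + a)"
    by (simp only: gauss_moment.simps)
  have "1 * 1 \<le> X"
    unfolding X_def using True \<open>even k\<close>
    by (intro mult_mono gauss_moment_even_ge_1) (simp_all add: gauss_moment_nonneg)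
  then have "1 * 1 \<le> real a * X"
    using assms by (intro mult_mono) simp_all
  moreover have "(gauss_moment a)\<^sup>2 = real k * X + X"
    unfolding X_def using ma by (simp add: power2_eq_square algebra_simps)
  moreover have "(real (k + a) + 1) * X \<le> gauss_moment (a + a)"
    unfolding maa X_def by (intro mult_left_mono gauss_moment_mult_le) simp
  moreover have "(real (k + a) + 1) * X = real k * X + real a * X + X"
    by (simp add: algebra_simps)
  ultimately show ?thesis
    by linarith
qed

abbreviation gaussian_vector :: "'i set \<Rightarrow> ('i \<Rightarrow> real) measure" where
  "gaussian_vector I \<equiv> PiM I (\<lambda>_. std_normal_distribution)"

lemma prob_space_gaussian_vector: "prob_space (gaussian_vector I)"
  by (intro prob_space_PiM prob_space_normal_density) simp

lemma product_sigma_finite_std_normal: "product_sigma_finite (\<lambda>_. std_normal_distribution)"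
  by (simp add: product_sigma_finite_def prob_space_imp_sigma_finite prob_space_normal_density)

lemma
  assumes "finite I"
  shows integrable_gaussian_monomial:
      "integrable (gaussian_vector I) (\<lambda>x. \<Prod>k\<in>I. x k ^ a k)"
    and integral_gaussian_monomial:
      "integral\<^sup>L (gaussian_vector I) (\<lambda>x. \<Prod>k\<in>I. x k ^ a k) = (\<Prod>k\<in>I. gauss_moment (a k))"
proof -
  interpret product_sigma_finite "\<lambda>_. std_normal_distribution"
    by (rule product_sigma_finite_std_normal)
  show "integrable (gaussian_vector I) (\<lambda>x. \<Prod>k\<in>I. x k ^ a k)"
    using product_integrable_prod[OF assms, of "\<lambda>k y. y ^ a k"]
    by (simp add: integrable_std_normal_distribution_moment)
  show "integral\<^sup>L (gaussian_vector I) (\<lambda>x. \<Prod>k\<in>I. x k ^ a k) = (\<Prod>k\<in>I. gauss_moment (a k))"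
    using product_integral_prod[OF assms, of "\<lambda>k y. y ^ a k"]
    by (simp add: integrable_std_normal_distribution_moment integral_std_normal_power)
qed

definition gauss_monomial_cov :: "'i set \<Rightarrow> ('i \<Rightarrow> nat) \<Rightarrow> ('i \<Rightarrow> nat) \<Rightarrow> real" where
  "gauss_monomial_cov I a b =
     (\<Prod>k\<in>I. gauss_moment (a k + b k)) - (\<Prod>k\<in>I. gauss_moment (a k)) * (\<Prod>k\<in>I. gauss_moment (b k))"

lemma gauss_monomial_cov_nonneg: "0 \<le> gauss_monomial_cov I a b"
proof -
  have "(\<Prod>k\<in>I. gauss_moment (a k)) * (\<Prod>k\<in>I. gauss_moment (b k))
      = (\<Prod>k\<in>I. gauss_moment (a k) * gauss_moment (b k))"
    by (simp add: prod.distrib)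
  also have "\<dots> \<le> (\<Prod>k\<in>I. gauss_moment (a k + b k))"
    by (intro prod_mono) (simp add: gauss_moment_mult_le gauss_moment_nonneg)
  finally show ?thesis
    by (simp add: gauss_monomial_cov_def)
qed

lemma prod_diff_ge_1:
  fixes x y :: "'i \<Rightarrow> real"
  assumes "finite I" "k0 \<in> I"
    and "\<And>k. k \<in> I \<Longrightarrow> 0 \<le> y k \<and> y k \<le> x k" "\<And>k. k \<in> I \<Longrightarrow> 1 \<le> x k"
    and "1 \<le> x k0 - y k0"
  shows "1 \<le> prod x I - prod y I"
proof -
  define P where "P = prod x (I - {k0})"
  define Q where "Q = prod y (I - {k0})"
  have split: "prod x I = x k0 * P" "prod y I = y k0 * Q"
    unfolding P_def Q_def using assms(1,2) by (simp_all add: prod.remove)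
  have "1 \<le> P" "0 \<le> Q" "Q \<le> P"
    unfolding P_def Q_def using assms(3,4) by (auto intro: prod_ge_1 prod_nonneg prod_mono)
  have "y k0 * Q \<le> y k0 * P"
    using \<open>Q \<le> P\<close> assms(2,3) by (intro mult_left_mono) auto
  moreover have "1 * 1 \<le> (x k0 - y k0) * P"
    using \<open>1 \<le> P\<close> assms(5) by (intro mult_mono) simp_all
  ultimately show ?thesis
    unfolding split by (simp add: algebra_simps)
qed

lemma gauss_monomial_cov_self_ge_1:
  assumes "finite I" "k0 \<in> I" "a k0 \<noteq> 0"
  shows "1 \<le> gauss_monomial_cov I a a"
proof -
  have "1 \<le> (\<Prod>k\<in>I. gauss_moment (a k + a k)) - (\<Prod>k\<in>I. (gauss_moment (a k))\<^sup>2)"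
  proof (rule prod_diff_ge_1[OF assms(1,2)])
    fix k
    show "0 \<le> (gauss_moment (a k))\<^sup>2 \<and> (gauss_moment (a k))\<^sup>2 \<le> gauss_moment (a k + a k)"
      using gauss_moment_mult_le[of "a k" "a k"] by (simp add: power2_eq_square)
    show "1 \<le> gauss_moment (a k + a k)"
      by (simp add: gauss_moment_even_ge_1)
    show "1 \<le> gauss_moment (a k0 + a k0) - (gauss_moment (a k0))\<^sup>2"
      using assms(3) by (simp add: gauss_moment_variance_ge_1)
  qed
  then show ?thesis
    by (simp add: gauss_monomial_cov_def power2_eq_square prod.distrib)
qed

lemma variance_gaussian_polynomial:
  fixes c :: "'t \<Rightarrow> real" and e :: "'t \<Rightarrow> 'i \<Rightarrow> nat"
  assumes "finite I"
  shows "Var (gaussian_vector I) (\<lambda>x. \<Sum>t\<in>T. c t * (\<Prod>k\<in>I. x k ^ e t k))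
       = (\<Sum>t\<in>T. \<Sum>s\<in>T. c t * c s * gauss_monomial_cov I (e t) (e s))"
proof -
  interpret prob_space "gaussian_vector I"
    by (rule prob_space_gaussian_vector)
  let ?m = "\<lambda>a. \<Prod>k\<in>I. gauss_moment (a k)"
  define X where "X x = (\<Sum>t\<in>T. c t * (\<Prod>k\<in>I. x k ^ e t k))" for x :: "'i \<Rightarrow> real"
  have X2: "(X x)\<^sup>2 = (\<Sum>t\<in>T. \<Sum>s\<in>T. c t * c s * (\<Prod>k\<in>I. x k ^ (e t k + e s k)))" for x
    unfolding X_def power2_eq_square sum_product
    by (intro sum.cong refl) (simp add: power_add prod.distrib mult_ac)
  have "integrable (gaussian_vector I) X"
    unfolding X_def using assms by (simp add: integrable_gaussian_monomial)
  moreover have "integrable (gaussian_vector I) (\<lambda>x. (X x)\<^sup>2)"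
    unfolding X2 using assms by (simp add: integrable_gaussian_monomial)
  ultimately have "Var (gaussian_vector I) X = expectation (\<lambda>x. (X x)\<^sup>2) - (expectation X)\<^sup>2"
    by (simp add: Var_def variance_eq)
  moreover have "expectation (\<lambda>x. (X x)\<^sup>2) = (\<Sum>t\<in>T. \<Sum>s\<in>T. c t * c s * ?m (\<lambda>k. e t k + e s k))"
    unfolding X2 using assms by (simp add: integrable_gaussian_monomial integral_gaussian_monomial)
  moreover have "expectation X = (\<Sum>t\<in>T. c t * ?m (e t))"
    unfolding X_def using assms by (simp add: integrable_gaussian_monomial integral_gaussian_monomial)
  then have "(expectation X)\<^sup>2 = (\<Sum>t\<in>T. \<Sum>s\<in>T. c t * c s * (?m (e t) * ?m (e s)))"
    by (simp add: power2_eq_square sum_product mult_ac)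
  moreover have "(\<Sum>t\<in>T. \<Sum>s\<in>T. c t * c s * gauss_monomial_cov I (e t) (e s))
      = (\<Sum>t\<in>T. \<Sum>s\<in>T. c t * c s * ?m (\<lambda>k. e t k + e s k))
        - (\<Sum>t\<in>T. \<Sum>s\<in>T. c t * c s * (?m (e t) * ?m (e s)))"
    by (simp add: gauss_monomial_cov_def right_diff_distrib sum_subtractf)
  ultimately have
    "Var (gaussian_vector I) X = (\<Sum>t\<in>T. \<Sum>s\<in>T. c t * c s * gauss_monomial_cov I (e t) (e s))"
    by simp
  then show ?thesis
    by (simp only: X_def[abs_def])
qed

lemma variance_gaussian_polynomial_ge:
  fixes c :: "'t \<Rightarrow> real" and e :: "'t \<Rightarrow> 'i \<Rightarrow> nat"
  assumes "finite I" "finite T"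
    and "\<And>t. t \<in> T \<Longrightarrow> 0 \<le> c t" "\<And>t. t \<in> T \<Longrightarrow> \<exists>k\<in>I. e t k \<noteq> 0"
  shows "(\<Sum>t\<in>T. (c t)\<^sup>2) \<le> Var (gaussian_vector I) (\<lambda>x. \<Sum>t\<in>T. c t * (\<Prod>k\<in>I. x k ^ e t k))"
proof -
  have "(\<Sum>t\<in>T. (c t)\<^sup>2) \<le> (\<Sum>t\<in>T. c t * c t * gauss_monomial_cov I (e t) (e t))"
  proof (intro sum_mono)
    fix t assume "t \<in> T"
    then obtain k where "k \<in> I" "e t k \<noteq> 0"
      using assms(4) by blast
    then show "(c t)\<^sup>2 \<le> c t * c t * gauss_monomial_cov I (e t) (e t)"
      using gauss_monomial_cov_self_ge_1[OF assms(1)] mult_left_mono[of 1 _ "c t * c t"]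
      by (simp add: power2_eq_square)
  qed
  also have "\<dots> \<le> (\<Sum>t\<in>T. \<Sum>s\<in>T. c t * c s * gauss_monomial_cov I (e t) (e s))"
    using assms(2,3)
    by (intro sum_mono member_le_sum) (simp_all add: gauss_monomial_cov_nonneg)
  finally show ?thesis
    using assms(1) by (simp add: variance_gaussian_polynomial)
qed

lemma prod_eq_prod_power_card_fiber:
  assumes "finite V" "finite I" "f ` V \<subseteq> I"
  shows "(\<Prod>v\<in>V. x (f v)) = (\<Prod>k\<in>I. x k ^ card {v\<in>V. f v = k})"
  using prod.group[OF assms, of "\<lambda>v. x (f v)"] by simp

lemma variance_gaussian_products_ge:
  fixes c :: "'t \<Rightarrow> real" and f :: "'t \<Rightarrow> 'v \<Rightarrow> 'i"
  assumes "finite I" "finite T" "finite V" "V \<noteq> {}"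
    and "\<And>t v. t \<in> T \<Longrightarrow> v \<in> V \<Longrightarrow> f t v \<in> I" "\<And>t. t \<in> T \<Longrightarrow> 0 \<le> c t"
  shows "(\<Sum>t\<in>T. (c t)\<^sup>2) \<le> Var (gaussian_vector I) (\<lambda>x. \<Sum>t\<in>T. c t * (\<Prod>v\<in>V. x (f t v)))"
proof -
  define e where "e t k = card {v\<in>V. f t v = k}" for t k
  have "(\<lambda>x. \<Sum>t\<in>T. c t * (\<Prod>v\<in>V. x (f t v))) = (\<lambda>x. \<Sum>t\<in>T. c t * (\<Prod>k\<in>I. x k ^ e t k))"
    unfolding e_def using assms(1,3,5)
    by (intro ext sum.cong refl arg_cong[where f = "(*) _"] prod_eq_prod_power_card_fiber) auto
  moreover have "\<exists>k\<in>I. e t k \<noteq> 0" if "t \<in> T" for t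
  proof -
    obtain v where "v \<in> V"
      using assms(4) by blast
    then have "e t (f t v) \<noteq> 0"
      unfolding e_def using assms(3) by (auto simp: card_eq_0_iff)
    then show ?thesis
      using assms(5)[OF that \<open>v \<in> V\<close>] by blast
  qed
  ultimately show ?thesis
    using assms(1,2,6) by (simp add: variance_gaussian_polynomial_ge)
qed

text \<open>A term of the expansion is an edge labelling i together with a permutation \<sigma> v of
  {..<p} at every vertex v; it picks the entry of G indexed by the sorted labels at v
  rearranged by \<sigma> v.\<close>

definition wig_terms ::
    "nat \<Rightarrow> nat \<Rightarrow> 'v set \<Rightarrow> 'e set \<Rightarrow> (('e \<Rightarrow> nat) \<times> ('v \<Rightarrow> nat \<Rightarrow> nat)) set" where
  "wig_terms n p V E = (E \<rightarrow>\<^sub>E {..<n}) \<times> (V \<rightarrow>\<^sub>E {\<pi>. \<pi> permutes {..<p}})"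

fun wig_entry ::
    "nat \<Rightarrow> 'e set \<Rightarrow> ('e \<Rightarrow> 'v multiset) \<Rightarrow> ('e \<Rightarrow> nat) \<times> ('v \<Rightarrow> nat \<Rightarrow> nat) \<Rightarrow> 'v \<Rightarrow> nat list"
  where
  "wig_entry p E ends (i, \<sigma>) v = map (\<lambda>k. sorted_list_of_multiset (labels_at E ends i v) ! \<sigma> v k) [0..<p]"

lemma mG_wig_expansion:
  assumes "finite V"
  shows "mG n V E ends (wig p G) = (\<Sum>t\<in>wig_terms n p V E.
           (1 / sqrt (fact p)) ^ card V * (\<Prod>v\<in>V. G (wig_entry p E ends t v)))"
proof -
  let ?P = "{\<pi>. \<pi> permutes {..<p}}"
  let ?sl = "\<lambda>i v. sorted_list_of_multiset (labels_at E ends i v)"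
  have "mG n V E ends (wig p G) = (\<Sum>i\<in>E \<rightarrow>\<^sub>E {..<n}.
          (1 / sqrt (fact p)) ^ card V * (\<Prod>v\<in>V. \<Sum>\<pi>\<in>?P. G (map (\<lambda>k. ?sl i v ! \<pi> k) [0..<p])))"
    unfolding mG_def wig_def prod.distrib by simp
  also have "\<dots> = (\<Sum>i\<in>E \<rightarrow>\<^sub>E {..<n}. \<Sum>\<sigma>\<in>V \<rightarrow>\<^sub>E ?P.
          (1 / sqrt (fact p)) ^ card V * (\<Prod>v\<in>V. G (wig_entry p E ends (i, \<sigma>) v)))"
    using assms by (simp add: prod_sum_PiE finite_permutations sum_distrib_left)
  finally show ?thesis
    by (simp add: wig_terms_def sum.cartesian_product')
qed

lemma card_wig_terms:
  assumes "finite V" "finite E"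
  shows "card (wig_terms n p V E) = n ^ card E * fact p ^ card V"
  using assms by (simp add: wig_terms_def card_cartesian_product card_PiE card_permutations)

lemma size_labels_at: "size (labels_at E ends i v) = mdegree E ends v"
  by (simp add: labels_at_def mdegree_def)

lemma set_mset_labels_at: "finite E \<Longrightarrow> set_mset (labels_at E ends i v) \<subseteq> i ` E"
  by (auto simp: labels_at_def set_mset_sum split: if_splits)

lemma wig_entry_in_tidx:
  assumes "regular p V E ends" "t \<in> wig_terms n p V E" "v \<in> V"
  shows "wig_entry p E ends t v \<in> tidx n p"
proof -
  obtain i \<sigma> where t: "t = (i, \<sigma>)" and i: "i \<in> E \<rightarrow>\<^sub>E {..<n}" and perm: "\<sigma> v permutes {..<p}"
    using assms(2,3) unfolding wig_terms_def by fastforce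
  let ?sl = "sorted_list_of_multiset (labels_at E ends i v)"
  have "length ?sl = size (labels_at E ends i v)"
    by (metis mset_sorted_list_of_multiset size_mset)
  then have "length ?sl = p"
    using assms(1,3) by (simp add: size_labels_at regular_def)
  moreover have "set ?sl \<subseteq> {..<n}"
    using set_mset_labels_at[of E ends i v] assms(1) i by (auto simp: regular_def multigraph_def)
  then have "?sl ! j < n" if "j < p" for j
    using that \<open>length ?sl = p\<close> nth_mem[of j ?sl] by auto
  moreover have "\<sigma> v k < p" if "k < p" for k
    using permutes_in_image[OF perm] that by auto
  ultimately show ?thesis
    by (auto simp: t tidx_def)
qed

lemma falling_le_power: "falling n b \<le> real n ^ b"
proof (cases "n < b")
  case True
  then have "falling n b = 0"
    unfolding falling_def by (intro prod_zero) auto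
  then show ?thesis by simp
next
  case False
  then have "falling n b \<le> (\<Prod>k<b. real n)"
    unfolding falling_def by (intro prod_mono) auto
  then show ?thesis by simp
qed

lemma finite_tidx: "finite (tidx n p)"
  using finite_lists_length_eq[of "{..<n}" p] by (simp add: tidx_def conj_commute)

theorem corollary5p4:
  fixes p n :: nat and V :: "'v set" and E :: "'e set" and ends :: "'e \<Rightarrow> 'v multiset"
  assumes "regular p V E ends"
    and "V \<noteq> {}"
  shows "Var (gauss_tensor n p) (\<lambda>G. mG n V E ends (wig p G)) \<ge> falling n (card E)"
proof -
  have fin: "finite V" "finite E"
    using assms(1) by (simp_all add: regular_def multigraph_def)
  define c where "c = (1 / sqrt (fact p)) ^ card V"
  have "c\<^sup>2 = ((1 / sqrt (fact p))\<^sup>2) ^ card V"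
    unfolding c_def by (metis power_mult mult.commute)
  then have c2: "fact p ^ card V * c\<^sup>2 = 1"
    by (simp add: power_divide)
  have "falling n (card E) \<le> real n ^ card E"
    by (rule falling_le_power)
  also have "\<dots> = (\<Sum>t\<in>wig_terms n p V E. c\<^sup>2)"
    using fin c2 by (simp add: card_wig_terms mult.assoc)
  also have "\<dots> \<le> Var (gaussian_vector (tidx n p))
      (\<lambda>G. \<Sum>t\<in>wig_terms n p V E. c * (\<Prod>v\<in>V. G (wig_entry p E ends t v)))"
    using fin assms
    by (intro variance_gaussian_products_ge finite_tidx wig_entry_in_tidx)
       (simp_all add: wig_terms_def c_def finite_PiE finite_permutations)
  also have "\<dots> = Var (gauss_tensor n p) (\<lambda>G. mG n V E ends (wig p G))"
    using fin by (simp add: gauss_tensor_def mG_wig_expansion c_def)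
  finally show ?thesis .
qed

end
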